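(* Let $S$ be a semigroup with finite $\mathcal{R}$-height, and let $A$ be an ideal of $S$. Let $n$ be the maximum length of a chain of $\mathcal{R}$-classes of $S$ that are contained in $A$. Then $\mathrm{H}_{\mathcal{R}}(A)\leq n$.
   Context: For a semigroup $S$, $S^1$ denotes $S$ with an identity adjoined if necessary. Green's preorder: $a\leq_{\mathcal{R}} b$ iff $aS^1\subseteq bS^1$; $\mathcal{R}$ is the associated equivalence. $\mathcal{R}$-classes are ordered by $R_a\leq R_b$ iff $a\leq_{\mathcal{R}} b$, and the $\mathcal{R}$-height $\mathrm{H}_{\mathcal{R}}(S)$ is the supremum of the cardinalities of chains of $\mathcal{R}$-classes. An ideal is a non-empty subset $A$ with $SA\cup AS\subseteq A$; $\mathrm{H}_{\mathcal{R}}(A)$ is computed in the semigroup $A$ itself. *)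

theory Defs
  imports Main "HOL-Library.Extended_Nat"
begin

text \<open>Green's notions are relativised to a subsemigroup given by a carrier set T
  (T = UNIV gives S itself; T = A gives the ideal A as a semigroup).
  a \<le>_R b in T iff a T^1 \<subseteq> b T^1 iff a = b or a = b t for some t in T.\<close>

definition R_le :: "'a::semigroup_mult set \<Rightarrow> 'a \<Rightarrow> 'a \<Rightarrow> bool" where
  "R_le T a b \<longleftrightarrow> a = b \<or> (\<exists>t\<in>T. a = b * t)"

definition R_eq :: "'a::semigroup_mult set \<Rightarrow> 'a \<Rightarrow> 'a \<Rightarrow> bool" where
  "R_eq T a b \<longleftrightarrow> R_le T a b \<and> R_le T b a"

definition R_class :: "'a::semigroup_mult set \<Rightarrow> 'a \<Rightarrow> 'a set" where
  "R_class T a = {b \<in> T. R_eq T a b}"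

definition R_classes :: "'a::semigroup_mult set \<Rightarrow> 'a set set" where
  "R_classes T = R_class T ` T"

definition R_class_le :: "'a::semigroup_mult set \<Rightarrow> 'a set \<Rightarrow> 'a set \<Rightarrow> bool" where
  "R_class_le T X Y \<longleftrightarrow> (\<forall>x\<in>X. \<forall>y\<in>Y. R_le T x y)"

definition R_chain :: "'a::semigroup_mult set \<Rightarrow> 'a set set \<Rightarrow> bool" where
  "R_chain T C \<longleftrightarrow> C \<subseteq> R_classes T \<and>
     (\<forall>X\<in>C. \<forall>Y\<in>C. R_class_le T X Y \<or> R_class_le T Y X)"

text \<open>R-height: supremum of cardinalities of chains of R-classes (in enat;
  an infinite chain has arbitrarily large finite subchains, so taking the
  supremum over finite chains gives the same value).\<close>
definition R_height :: "'a::semigroup_mult set \<Rightarrow> enat" where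
  "R_height T = Sup {enat (card C) | C. finite C \<and> R_chain T C}"

definition is_ideal :: "'a::semigroup_mult set \<Rightarrow> bool" where
  "is_ideal A \<longleftrightarrow> A \<noteq> {} \<and> (\<forall>s a. a \<in> A \<longrightarrow> s * a \<in> A \<and> a * s \<in> A)"

end

theory Submission
  imports Defs
begin

text \<open>Each \<open>\<R>\<close>-class of the ideal \<open>A\<close> lies in a unique \<open>\<R>\<close>-class of \<open>S\<close>, which is contained
  in \<open>A\<close>. On a chain of \<open>\<R>\<close>-classes of \<open>A\<close> this assignment is injective: if \<open>x = y a\<close> with
  \<open>a \<in> A\<close> and \<open>y = x s\<close> with \<open>s \<in> S\<^sup>1\<close>, then \<open>y = x (s a s)\<close> with \<open>s a s \<in> A\<close>, so comparable
  elements of \<open>A\<close> that are \<open>\<R>\<close>-related in \<open>S\<close> are already \<open>\<R>\<close>-related in \<open>A\<close>. Hence every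
  finite chain of \<open>\<R>\<close>-classes of \<open>A\<close> yields a chain of the same size of \<open>\<R>\<close>-classes of \<open>S\<close>
  inside \<open>A\<close>.\<close>

lemma R_le_refl [simp]: "R_le T a a"
  by (simp add: R_le_def)

lemma R_le_trans:
  assumes "\<And>x y. x \<in> T \<Longrightarrow> y \<in> T \<Longrightarrow> x * y \<in> T"
    and "R_le T a b" "R_le T b c"
  shows "R_le T a c"
  using assms unfolding R_le_def by (metis mult.assoc)

lemma R_le_mono: "T \<subseteq> T' \<Longrightarrow> R_le T a b \<Longrightarrow> R_le T' a b"
  unfolding R_le_def by blast

lemma R_eq_mono: "T \<subseteq> T' \<Longrightarrow> R_eq T a b \<Longrightarrow> R_eq T' a b"
  unfolding R_eq_def using R_le_mono by blast

lemma R_class_self: "x \<in> T \<Longrightarrow> x \<in> R_class T x"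
  by (simp add: R_class_def R_eq_def)

lemma R_class_eq_iff:
  assumes "\<And>x y. x \<in> T \<Longrightarrow> y \<in> T \<Longrightarrow> x * y \<in> T" and "x \<in> T" "y \<in> T"
  shows "R_class T x = R_class T y \<longleftrightarrow> R_eq T x y"
proof
  assume "R_class T x = R_class T y"
  then have "x \<in> R_class T y"
    using R_class_self[OF \<open>x \<in> T\<close>] by simp
  then show "R_eq T x y"
    by (simp add: R_class_def R_eq_def)
next
  assume "R_eq T x y"
  then show "R_class T x = R_class T y"
    unfolding R_class_def R_eq_def using R_le_trans[OF assms(1)] by blast
qed

lemma R_class_le_R_classI:
  assumes "\<And>x y. x \<in> T \<Longrightarrow> y \<in> T \<Longrightarrow> x * y \<in> T" and "R_le T a b"
  shows "R_class_le T (R_class T a) (R_class T b)"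
  unfolding R_class_le_def R_class_def R_eq_def
  using R_le_trans[OF assms(1)] assms(2) by blast

lemma is_ideal_mult_closed: "is_ideal A \<Longrightarrow> x \<in> A \<Longrightarrow> y \<in> A \<Longrightarrow> x * y \<in> A"
  unfolding is_ideal_def by blast

lemma R_class_UNIV_subset_ideal:
  assumes "is_ideal A" "x \<in> A"
  shows "R_class UNIV x \<subseteq> A"
proof
  fix y assume "y \<in> R_class UNIV x"
  then have "y = x \<or> (\<exists>t. y = x * t)"
    unfolding R_class_def R_eq_def R_le_def by auto
  with assms show "y \<in> A"
    unfolding is_ideal_def by auto
qed

lemma ideal_R_eq_if_R_le:
  assumes A: "is_ideal A" and "R_le A x y" "R_le UNIV y x"
  shows "R_eq A x y"
proof -
  have "R_le A y x"
  proof (cases "x = y \<or> y = x")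
    case False
    with assms(2,3) obtain a s where "a \<in> A" "x = y * a" "y = x * s"
      unfolding R_le_def by blast
    then have "y = x * (s * a * s)"
      by (metis mult.assoc)
    moreover have "s * a * s \<in> A"
      using A \<open>a \<in> A\<close> unfolding is_ideal_def by blast
    ultimately show ?thesis
      unfolding R_le_def by blast
  qed auto
  with assms(2) show ?thesis
    unfolding R_eq_def by blast
qed

text \<open>The union avoids choosing a representative: all elements of an \<open>\<R>\<close>-class of \<open>A\<close>
  have the same \<open>\<R>\<close>-class in \<open>S\<close>.\<close>

definition R_class_lift :: "'a::semigroup_mult set \<Rightarrow> 'a set" where
  "R_class_lift X = (\<Union>x\<in>X. R_class UNIV x)"

lemma R_class_lift_R_class:
  assumes "is_ideal A" "x \<in> A"
  shows "R_class_lift (R_class A x) = R_class UNIV x"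
proof -
  have "R_class UNIV y = R_class UNIV x" if "y \<in> R_class A x" for y
    using that R_eq_mono[of A UNIV x y] R_class_eq_iff[of UNIV y x]
    unfolding R_class_def R_eq_def by auto
  then show ?thesis
    unfolding R_class_lift_def using R_class_self[OF assms(2)] by blast
qed

lemma R_classes_ideal_lift:
  assumes "is_ideal A" "X \<in> R_classes A"
  obtains x where "x \<in> A" "X = R_class A x" "R_class_lift X = R_class UNIV x"
  using assms R_class_lift_R_class unfolding R_classes_def by blast

lemma R_class_lift_subset_ideal:
  assumes "is_ideal A" "X \<in> R_classes A"
  shows "R_class_lift X \<subseteq> A"
  using R_classes_ideal_lift[OF assms] R_class_UNIV_subset_ideal[OF assms(1)] by metis

lemma inj_on_R_class_lift:
  assumes A: "is_ideal A" and C: "R_chain A C"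
  shows "inj_on R_class_lift C"
proof (rule inj_onI)
  fix X Y assume "X \<in> C" "Y \<in> C" and lift_eq: "R_class_lift X = R_class_lift Y"
  with C obtain x y where x: "x \<in> A" "X = R_class A x" "R_class_lift X = R_class UNIV x"
      and y: "y \<in> A" "Y = R_class A y" "R_class_lift Y = R_class UNIV y"
      and "R_class_le A X Y \<or> R_class_le A Y X"
    using R_classes_ideal_lift[OF A] unfolding R_chain_def by (metis subsetD)
  then have "R_le A x y \<or> R_le A y x"
    unfolding R_class_le_def using R_class_self by blast
  moreover have "R_eq UNIV x y"
    using lift_eq x(3) y(3) R_class_eq_iff[of UNIV x y] by simp
  ultimately have "R_eq A x y"
    using ideal_R_eq_if_R_le[OF A] unfolding R_eq_def by blast
  then show "X = Y"
    using x y R_class_eq_iff[OF is_ideal_mult_closed[OF A]] by simp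
qed

lemma R_chain_R_class_lift:
  assumes A: "is_ideal A" and C: "R_chain A C"
  shows "R_chain UNIV (R_class_lift ` C)"
  unfolding R_chain_def
proof (intro conjI ballI)
  have lift: "\<exists>x\<in>A. X = R_class A x \<and> R_class_lift X = R_class UNIV x" if "X \<in> C" for X
    using that C R_classes_ideal_lift[OF A] unfolding R_chain_def by blast
  then show "R_class_lift ` C \<subseteq> R_classes UNIV"
    unfolding R_classes_def by blast
  fix X' Y' assume "X' \<in> R_class_lift ` C" "Y' \<in> R_class_lift ` C"
  then obtain X Y where "X \<in> C" "Y \<in> C" "X' = R_class_lift X" "Y' = R_class_lift Y"
    by blast
  with lift obtain x y where x: "x \<in> A" "X = R_class A x" "X' = R_class UNIV x"
      and y: "y \<in> A" "Y = R_class A y" "Y' = R_class UNIV y"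
    by metis
  have "R_class_le A X Y \<or> R_class_le A Y X"
    using C \<open>X \<in> C\<close> \<open>Y \<in> C\<close> unfolding R_chain_def by blast
  then have "R_le A x y \<or> R_le A y x"
    unfolding R_class_le_def using x y R_class_self by blast
  then have "R_le UNIV x y \<or> R_le UNIV y x"
    using R_le_mono[of A UNIV] by blast
  then show "R_class_le UNIV X' Y' \<or> R_class_le UNIV Y' X'"
    using x(3) y(3) R_class_le_R_classI[of UNIV] by auto
qed

theorem theorem3p14:
  fixes A :: "'a::semigroup_mult set"
  assumes "R_height (UNIV :: 'a set) < \<infinity>"
    and "is_ideal A"
  shows "R_height A \<le>
    Sup {enat (card C) | C. finite C \<and> R_chain (UNIV :: 'a set) C \<and> (\<forall>X\<in>C. X \<subseteq> A)}"
  unfolding R_height_def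
proof (rule Sup_least)
  fix e assume "e \<in> {enat (card C) | C. finite C \<and> R_chain A C}"
  then obtain C where e: "e = enat (card C)" and "finite C" "R_chain A C"
    by blast
  let ?C' = "R_class_lift ` C"
  have "card ?C' = card C"
    using card_image inj_on_R_class_lift[OF assms(2) \<open>R_chain A C\<close>] by blast
  moreover have "R_chain UNIV ?C'"
    using R_chain_R_class_lift[OF assms(2) \<open>R_chain A C\<close>] .
  moreover have "R_class_lift X \<subseteq> A" if "X \<in> C" for X
    using that \<open>R_chain A C\<close> R_class_lift_subset_ideal[OF assms(2)] unfolding R_chain_def by blast
  ultimately show "e \<le> Sup {enat (card C) | C. finite C \<and> R_chain UNIV C \<and> (\<forall>X\<in>C. X \<subseteq> A)}"
    using e \<open>finite C\<close> by (intro Sup_upper CollectI exI[of _ ?C']) auto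
qed

end
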